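(* Let $\mathcal{X}\subset\mathbb{R}^n$ be closed convex, $P$ a probability distribution on a sample space $\mathcal{S}$, and for each $s$ let $f(\cdot;s):\mathbb{R}^n\to\mathbb{R}$ be closed convex and subdifferentiable on $\mathcal{X}$; let $F(x)=\mathbb{E}_P[f(x;S)]$ and $\mathcal{X}^\star=\arg\min_{x\in\mathcal{X}}F(x)$. Assume $F$ is easy to optimize: for each $x^\star\in\mathcal{X}^\star$ and $P$-almost all $s$, $\inf_{x\in\mathcal{X}}f(x;s)=f(x^\star;s)$. Suppose models $f_x(\cdot;s)$ ($x\in\mathcal{X}$, $s\in\mathcal{S}$) satisfy (C.i) $y\mapsto f_x(y;s)$ is convex and subdifferentiable on $\mathcal{X}$; (C.ii) $f_x(x;s)=f(x;s)$ and $f_x(y;s)\le f(y;s)$ for all $y$; (C.iii) $f_x(y;s)\ge\inf_{z\in\mathcal{X}}f(z;s)$ for all $y$ and all $s$. Let $x_1\in\mathcal{X}$, $\alpha_k>0$, $S_1,S_2,\ldots$ i.i.d. $\sim P$, and $x_{k+1}=\arg\min_{x\in\mathcal{X}}\{f_{x_k}(x;S_k)+\frac{1}{2\alpha_k}\|x-x_k\|_2^2\}$. Then for any $x^\star\in\mathcal{X}^\star$, $$\tfrac12\|x_{k+1}-x^\star\|_2^2\le\tfrac12\|x_k-x^\star\|_2^2-\tfrac12[f(x_k;S_k)-f(x^\star;S_k)]\min\left\{\alpha_k,\frac{f(x_k;S_k)-f(x^\star;S_k)}{\|f'(x_k;S_k)\|_2^2}\right\}.$$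
   Context: $f'(x_k;S_k)$ denotes an element of the subdifferential $\partial f(x_k;S_k)$. When $f(x_k;S_k)=f(x^\star;S_k)$ the subtracted term is $0$. *)

theory Defs
  imports "HOL-Probability.Probability"
begin

definition subdifferential :: "(real^'n \<Rightarrow> real) \<Rightarrow> real^'n \<Rightarrow> (real^'n) set" where
  "subdifferential h x = {g. \<forall>y. h y \<ge> h x + g \<bullet> (y - x)}"

definition subdifferentiable_on :: "(real^'n \<Rightarrow> real) \<Rightarrow> (real^'n) set \<Rightarrow> bool" where
  "subdifferentiable_on h X \<longleftrightarrow> (\<forall>x\<in>X. subdifferential h x \<noteq> {})"

definition pop_obj :: "'s measure \<Rightarrow> (real^'n \<Rightarrow> 's \<Rightarrow> real) \<Rightarrow> real^'n \<Rightarrow> real" where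
  "pop_obj P f x = (\<integral>s. f x s \<partial>P)"

definition sol_set :: "'s measure \<Rightarrow> (real^'n \<Rightarrow> 's \<Rightarrow> real) \<Rightarrow> (real^'n) set \<Rightarrow> (real^'n) set" where
  "sol_set P f X = {xs \<in> X. \<forall>x\<in>X. pop_obj P f xs \<le> pop_obj P f x}"

end

theory Submission
  imports Defs
begin

text \<open>Write a = x_k, b = x_{k+1} and h for the model at a. Since b minimises the convex function
  h + |. - a|^2 / (2 alpha) over X, it satisfies the three-point inequality
  h b + |b - a|^2 / (2 alpha) + |x* - b|^2 / (2 alpha) <= h x* + |x* - a|^2 / (2 alpha).
  The model lies below f, and by easy optimisation f(x*; s) is the minimum of f(.; s), which by (C.iii)
  is also below h b. Linearising h b >= f a + g . (b - a) and expanding |(b - a) + m g|^2 >= 0 for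
  m = min {alpha, (f a - f x*) / |g|^2} turns the gain h b - f x* into the claimed decrease.\<close>

lemma power2_norm_add:
  fixes u v :: "'a::real_inner"
  shows "(norm (u + v))\<^sup>2 = (norm u)\<^sup>2 + 2 * (u \<bullet> v) + (norm v)\<^sup>2"
  by (simp add: power2_norm_eq_inner inner_add_left inner_add_right inner_commute)

lemma nonpos_if_linear_le_quadratic:
  fixes d K :: real
  assumes le: "\<And>t. 0 < t \<Longrightarrow> t \<le> 1 \<Longrightarrow> t * d \<le> K * t\<^sup>2"
  shows "d \<le> 0"
proof (rule ccontr)
  assume "\<not> d \<le> 0"
  define t where "t = min 1 (d / (2 * \<bar>K\<bar> + 1))"
  have t: "0 < t" "t \<le> 1" using \<open>\<not> d \<le> 0\<close> by (auto simp: t_def)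
  have "t * d \<le> t * (K * t)" using le[OF t] by (simp add: power2_eq_square mult.assoc mult.left_commute)
  then have "d \<le> K * t" using t by simp
  also have "\<dots> \<le> \<bar>K\<bar> * t" using t by (simp add: mult_right_mono)
  also have "\<dots> \<le> \<bar>K\<bar> * (d / (2 * \<bar>K\<bar> + 1))" unfolding t_def by (intro mult_left_mono) auto
  also have "\<dots> < d" using \<open>\<not> d \<le> 0\<close> by (simp add: field_simps add_pos_nonneg)
  finally show False by simp
qed

lemma prox_variational_inequality:
  fixes \<phi> :: "'a::real_inner \<Rightarrow> real"
  assumes cvx: "convex_on X \<phi>" and "convex X" and bX: "b \<in> X" and yX: "y \<in> X"
    and opt: "\<forall>z\<in>X. \<phi> b + c * (norm (b - a))\<^sup>2 \<le> \<phi> z + c * (norm (z - a))\<^sup>2"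
  shows "\<phi> b \<le> \<phi> y + 2 * c * ((y - b) \<bullet> (b - a))"
proof -
  \<comment> \<open>Compare b with the points of the segment towards y: the gain is linear in the step t,
    the loss only quadratic.\<close>
  define p where "p = (y - b) \<bullet> (b - a)"
  define N where "N = (norm (y - b))\<^sup>2"
  have "t * (\<phi> b - \<phi> y - 2 * c * p) \<le> (c * N) * t\<^sup>2" if t: "0 < t" "t \<le> 1" for t
  proof -
    define z where "z = (1 - t) *\<^sub>R b + t *\<^sub>R y"
    have zX: "z \<in> X" using \<open>convex X\<close> bX yX t unfolding z_def by (simp add: convex_def)
    have za: "z - a = (b - a) + t *\<^sub>R (y - b)" unfolding z_def by (simp add: algebra_simps)
    have "\<phi> b + c * (norm (b - a))\<^sup>2 \<le> \<phi> z + c * (norm (z - a))\<^sup>2" using opt zX by blast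
    also have "\<phi> z \<le> (1 - t) * \<phi> b + t * \<phi> y"
      using convex_onD[OF cvx, of t b y] t bX yX unfolding z_def by simp
    also have "(norm (z - a))\<^sup>2 = (norm (b - a))\<^sup>2 + 2 * t * p + t\<^sup>2 * N"
      unfolding za power2_norm_add p_def N_def by (simp add: power_mult_distrib inner_commute)
    finally show ?thesis by (simp add: algebra_simps)
  qed
  then have "\<phi> b - \<phi> y - 2 * c * p \<le> 0" by (rule nonpos_if_linear_le_quadratic)
  then show ?thesis unfolding p_def by simp
qed

lemma prox_three_point:
  fixes \<phi> :: "'a::real_inner \<Rightarrow> real"
  assumes "convex_on X \<phi>" and "convex X" and "b \<in> X" and "y \<in> X"
    and "\<forall>z\<in>X. \<phi> b + c * (norm (b - a))\<^sup>2 \<le> \<phi> z + c * (norm (z - a))\<^sup>2"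
  shows "\<phi> b + c * (norm (b - a))\<^sup>2 + c * (norm (y - b))\<^sup>2 \<le> \<phi> y + c * (norm (y - a))\<^sup>2"
proof -
  have "(norm (y - a))\<^sup>2 = (norm (y - b))\<^sup>2 + 2 * ((y - b) \<bullet> (b - a)) + (norm (b - a))\<^sup>2"
    using power2_norm_add[of "y - b" "b - a"] by simp
  then have "c * (norm (y - a))\<^sup>2 = c * (norm (y - b))\<^sup>2 + 2 * c * ((y - b) \<bullet> (b - a)) + c * (norm (b - a))\<^sup>2"
    by (simp only: ring_distribs mult.assoc)
  with prox_variational_inequality[OF assms] show ?thesis by linarith
qed

lemma gap_mult_min_step_le:
  fixes g u :: "'a::real_inner"
  assumes "\<alpha> > 0" and "v \<le> ha" and "v \<le> hb" and lin: "ha + g \<bullet> u \<le> hb"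
  shows "(ha - v) * min \<alpha> ((ha - v) / (norm g)\<^sup>2) \<le> 2 * \<alpha> * (hb - v) + (norm u)\<^sup>2"
proof -
  define m where "m = min \<alpha> ((ha - v) / (norm g)\<^sup>2)"
  have "0 \<le> m" and "m \<le> \<alpha>" using assms by (auto simp: m_def)
  have "m * (norm g)\<^sup>2 \<le> ha - v"
  proof (cases "g = 0")
    case False
    then have "m \<le> (ha - v) / (norm g)\<^sup>2" by (simp add: m_def)
    with False show ?thesis by (simp add: pos_le_divide_eq)
  qed (use assms in simp)
  have "0 \<le> (norm (u + m *\<^sub>R g))\<^sup>2" by simp
  also have "\<dots> = (norm u)\<^sup>2 + 2 * m * (g \<bullet> u) + m * (m * (norm g)\<^sup>2)"
    unfolding power2_norm_add by (simp add: power_mult_distrib inner_commute power2_eq_square)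
  also have "\<dots> \<le> (norm u)\<^sup>2 + 2 * m * (hb - ha) + m * (ha - v)"
    using \<open>0 \<le> m\<close> \<open>m * (norm g)\<^sup>2 \<le> ha - v\<close> lin
    by (intro add_mono mult_left_mono) auto
  finally have "m * (ha - v) \<le> 2 * m * (hb - v) + (norm u)\<^sup>2" by (simp add: algebra_simps)
  also have "\<dots> \<le> 2 * \<alpha> * (hb - v) + (norm u)\<^sup>2"
    using \<open>m \<le> \<alpha>\<close> \<open>v \<le> hb\<close> by (simp add: mult_right_mono)
  finally show ?thesis by (simp add: m_def mult.commute)
qed

lemma prox_step_sq_dist_le:
  fixes h :: "'a::real_inner \<Rightarrow> real"
  assumes "convex_on X h" and "convex X" and "\<alpha> > 0" and "b \<in> X" and "xs \<in> X"
    and prox: "\<forall>y\<in>X. h b + (1 / (2 * \<alpha>)) * (norm (b - a))\<^sup>2 \<le> h y + (1 / (2 * \<alpha>)) * (norm (y - a))\<^sup>2"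
    and subgrad: "h a + g \<bullet> (b - a) \<le> h b"
    and "h xs \<le> v" and "v \<le> h a" and "v \<le> h b"
  shows "(1/2) * (norm (b - xs))\<^sup>2
      \<le> (1/2) * (norm (a - xs))\<^sup>2 - (1/2) * (h a - v) * min \<alpha> ((h a - v) / (norm g)\<^sup>2)"
proof -
  have "h b + (1 / (2 * \<alpha>)) * (norm (b - a))\<^sup>2 + (1 / (2 * \<alpha>)) * (norm (xs - b))\<^sup>2
      \<le> v + (1 / (2 * \<alpha>)) * (norm (xs - a))\<^sup>2"
    using prox_three_point[OF assms(1,2,4,5) prox] \<open>h xs \<le> v\<close> by linarith
  from mult_left_mono[OF this, of "2 * \<alpha>"]
  have "2 * \<alpha> * (h b - v) + (norm (b - a))\<^sup>2 + (norm (b - xs))\<^sup>2 \<le> (norm (a - xs))\<^sup>2"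
    using \<open>\<alpha> > 0\<close> by (simp add: ring_distribs norm_minus_commute)
  moreover have "(h a - v) * min \<alpha> ((h a - v) / (norm g)\<^sup>2) \<le> 2 * \<alpha> * (h b - v) + (norm (b - a))\<^sup>2"
    using gap_mult_min_step_le[OF \<open>\<alpha> > 0\<close> \<open>v \<le> h a\<close> \<open>v \<le> h b\<close> subgrad] .
  ultimately show ?thesis by linarith
qed

lemma model_prox_step_sq_dist_le:
  fixes h f :: "real^'n \<Rightarrow> real"
  assumes "convex_on X h" and "convex X" and "\<alpha> > 0" and "a \<in> X" and "b \<in> X" and "xs \<in> X"
    and prox: "\<forall>y\<in>X. h b + (1 / (2 * \<alpha>)) * (norm (b - a))\<^sup>2 \<le> h y + (1 / (2 * \<alpha>)) * (norm (y - a))\<^sup>2"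
    and "g \<in> subdifferential h a"
    and "h a = f a" and "h xs \<le> f xs"
    and opt_value: "(INF z\<in>X. ereal (f z)) = ereal (f xs)"
    and model_lower: "(INF z\<in>X. ereal (f z)) \<le> ereal (h b)"
  shows "(1/2) * (norm (b - xs))\<^sup>2
      \<le> (1/2) * (norm (a - xs))\<^sup>2 - (1/2) * (f a - f xs) * min \<alpha> ((f a - f xs) / (norm g)\<^sup>2)"
proof -
  have "f xs \<le> f a" using INF_lower[OF \<open>a \<in> X\<close>, of "\<lambda>z. ereal (f z)"] opt_value by simp
  moreover have "f xs \<le> h b" using model_lower opt_value by simp
  moreover have "h a + g \<bullet> (b - a) \<le> h b" using \<open>g \<in> subdifferential h a\<close> by (simp add: subdifferential_def)
  ultimately show ?thesis
    using prox_step_sq_dist_le[OF assms(1,2,3,5,6) prox] \<open>h a = f a\<close> \<open>h xs \<le> f xs\<close> by simp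
qed

lemma AE_comp_of_distr_eq:
  assumes "Y \<in> measurable M N" and "distr M N Y = N" and "AE s in N. Q s"
  shows "AE \<omega> in M. Q (Y \<omega>)"
  using assms by (metis AE_distrD)

theorem lemma5:
  fixes X :: "(real^'n) set"
    and P :: "'s measure"
    and f :: "real^'n \<Rightarrow> 's \<Rightarrow> real"
    and mdl :: "real^'n \<Rightarrow> real^'n \<Rightarrow> 's \<Rightarrow> real"
    and M :: "'w measure"
    and S :: "nat \<Rightarrow> 'w \<Rightarrow> 's"
    and \<alpha> :: "nat \<Rightarrow> real"
    and x :: "nat \<Rightarrow> 'w \<Rightarrow> real^'n"
    and g :: "nat \<Rightarrow> 'w \<Rightarrow> real^'n"
    and xs :: "real^'n"
  assumes X_closed: "closed X" and X_convex: "convex X"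
    and P_prob: "prob_space P"
    and f_convex: "\<forall>s\<in>space P. convex_on UNIV (\<lambda>y. f y s)"
    and f_subdiff: "\<forall>s\<in>space P. subdifferentiable_on (\<lambda>y. f y s) X"
    and easy: "\<forall>xs'\<in>sol_set P f X. AE s in P. (INF z\<in>X. ereal (f z s)) = ereal (f xs' s)"
    and C_i: "\<forall>x0\<in>X. \<forall>s\<in>space P. convex_on X (\<lambda>y. mdl x0 y s) \<and> subdifferentiable_on (\<lambda>y. mdl x0 y s) X"
    and C_ii: "\<forall>x0\<in>X. \<forall>s\<in>space P. mdl x0 x0 s = f x0 s \<and> (\<forall>y. mdl x0 y s \<le> f y s)"
    and C_iii: "\<forall>x0\<in>X. \<forall>s\<in>space P. \<forall>y. (INF z\<in>X. ereal (f z s)) \<le> ereal (mdl x0 y s)"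
    and M_prob: "prob_space M"
    and S_meas: "\<forall>k. S k \<in> measurable M P"
    and S_distr: "\<forall>k. distr M P (S k) = P"
    and S_indep: "prob_space.indep_vars M (\<lambda>_. P) S UNIV"
    and x1: "\<forall>\<omega>\<in>space M. x 1 \<omega> \<in> X"
    and \<alpha>_pos: "\<forall>k\<ge>1. \<alpha> k > 0"
    and x_step: "\<forall>k\<ge>1. \<forall>\<omega>\<in>space M. x (k+1) \<omega> \<in> X \<and>
        (\<forall>y\<in>X. mdl (x k \<omega>) (x (k+1) \<omega>) (S k \<omega>) + (1 / (2 * \<alpha> k)) * (norm (x (k+1) \<omega> - x k \<omega>))\<^sup>2
               \<le> mdl (x k \<omega>) y (S k \<omega>) + (1 / (2 * \<alpha> k)) * (norm (y - x k \<omega>))\<^sup>2)"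
    and g_sub: "\<forall>k\<ge>1. \<forall>\<omega>\<in>space M. g k \<omega> \<in> subdifferential (\<lambda>y. f y (S k \<omega>)) (x k \<omega>)
        \<and> g k \<omega> \<in> subdifferential (\<lambda>y. mdl (x k \<omega>) y (S k \<omega>)) (x k \<omega>)"
    and xs_opt: "xs \<in> sol_set P f X"
  shows "AE \<omega> in M. \<forall>k\<ge>1.
      (1/2) * (norm (x (k+1) \<omega> - xs))\<^sup>2
        \<le> (1/2) * (norm (x k \<omega> - xs))\<^sup>2
           - (1/2) * (f (x k \<omega>) (S k \<omega>) - f xs (S k \<omega>))
             * min (\<alpha> k) ((f (x k \<omega>) (S k \<omega>) - f xs (S k \<omega>)) / (norm (g k \<omega>))\<^sup>2)"
proof -
  have xX: "x k \<omega> \<in> X" if "k \<ge> 1" "\<omega> \<in> space M" for k \<omega>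
    using that x1 x_step[rule_format, of "k - 1" \<omega>] by (cases "k = 1") auto
  have xsX: "xs \<in> X" using xs_opt by (simp add: sol_set_def)
  have "AE \<omega> in M. (INF z\<in>X. ereal (f z (S k \<omega>))) = ereal (f xs (S k \<omega>))" for k
    using AE_comp_of_distr_eq S_meas S_distr easy xs_opt by blast
  then have "AE \<omega> in M. \<forall>k. (INF z\<in>X. ereal (f z (S k \<omega>))) = ereal (f xs (S k \<omega>))"
    by (simp add: AE_all_countable)
  with AE_space show ?thesis
  proof eventually_elim
    case (elim \<omega>)
    show ?case
    proof (intro allI impI)
      fix k :: nat
      assume "k \<ge> 1"
      have aX: "x k \<omega> \<in> X" using xX \<open>k \<ge> 1\<close> elim(1) by simp
      have sP: "S k \<omega> \<in> space P" using measurable_space[OF S_meas[rule_format] elim(1)] .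
      from x_step g_sub \<alpha>_pos C_i C_ii C_iii aX sP \<open>k \<ge> 1\<close> elim xsX X_convex
      show "(1/2) * (norm (x (k+1) \<omega> - xs))\<^sup>2
        \<le> (1/2) * (norm (x k \<omega> - xs))\<^sup>2
           - (1/2) * (f (x k \<omega>) (S k \<omega>) - f xs (S k \<omega>))
             * min (\<alpha> k) ((f (x k \<omega>) (S k \<omega>) - f xs (S k \<omega>)) / (norm (g k \<omega>))\<^sup>2)"
        by (intro model_prox_step_sq_dist_le[where h = "\<lambda>y. mdl (x k \<omega>) y (S k \<omega>)"]) auto
    qed
  qed
qed

end
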